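(* Let $k$ be a field of characteristic $p>0$, let $d_1,\ldots,d_{n-1}$ be positive integers and suppose $d_n=\sum_{i=1}^{n-1}(d_i-1)$. Let \[ A = k[x_1,\ldots,x_n]/(x_1^{d_1}, \ldots, x_n^{d_n}) \quad\text{and}\quad B = k[x_1,\ldots,x_n]/(x_1^{d_1}, \ldots, x_{n-1}^{d_{n-1}}, x_n^{d_n-1}). \] If the multinomial coefficient $\binom{d_n}{d_1-1, \ldots, d_{n-1}-1}=\frac{d_n!}{(d_1-1)!\cdots(d_{n-1}-1)!}$ is not divisible by $p$, then both $A$ and $B$ have the weak Lefschetz property. If $\binom{d_n}{d_1-1, \ldots, d_{n-1}-1}$ is divisible by $p$, then $A$ fails to have the weak Lefschetz property.
   Context: Algebras are graded by degree, $A=\bigoplus_{i\ge0}A_i$. A graded artinian algebra $A$ has the weak Lefschetz property if there is a linear form $\ell\in A_1$ such that for every $i$ the map $A_i\to A_{i+1}$, $a\mapsto \ell a$, is injective or surjective. *)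

theory Defs
  imports Main
begin

text \<open>Monomial complete intersection k[x_0,...,x_(n-1)]/(x_0^(e 0),...,x_(n-1)^(e (n-1))).
  Its degree-i component A_i has k-basis the monomials x^a with a_j < e_j and |a| = i.
  An element of A_i is encoded by its coefficient function on exponent vectors, vanishing
  outside that basis set.\<close>

definition mono_basis :: "nat \<Rightarrow> (nat \<Rightarrow> nat) \<Rightarrow> nat \<Rightarrow> (nat \<Rightarrow> nat) set" where
  "mono_basis n e i = {a. (\<forall>j\<ge>n. a j = 0) \<and> (\<forall>j<n. a j < e j) \<and> (\<Sum>j<n. a j) = i}"

definition graded_piece :: "nat \<Rightarrow> (nat \<Rightarrow> nat) \<Rightarrow> nat \<Rightarrow> ((nat \<Rightarrow> nat) \<Rightarrow> 'a::field) set" where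
  "graded_piece n e i = {f. \<forall>a. a \<notin> mono_basis n e i \<longrightarrow> f a = 0}"

text \<open>Multiplication by the linear form l = sum_j c_j x_j, followed by reading off the
  coefficients at the basis monomials of the next degree (monomials with some exponent
  a_j >= e_j vanish in the quotient).\<close>

definition lin_mult :: "nat \<Rightarrow> (nat \<Rightarrow> 'a::field) \<Rightarrow> ((nat \<Rightarrow> nat) \<Rightarrow> 'a) \<Rightarrow> (nat \<Rightarrow> nat) \<Rightarrow> 'a" where
  "lin_mult n c f b = (\<Sum>j<n. if 0 < b j then c j * f (b(j := b j - 1)) else 0)"

definition mult_injective :: "nat \<Rightarrow> (nat \<Rightarrow> nat) \<Rightarrow> (nat \<Rightarrow> 'a::field) \<Rightarrow> nat \<Rightarrow> bool" where
  "mult_injective n e c i \<longleftrightarrow>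
     (\<forall>f \<in> graded_piece n e i.
        (\<forall>b \<in> mono_basis n e (Suc i). lin_mult n c f b = 0) \<longrightarrow> (\<forall>a. f a = 0))"

definition mult_surjective :: "nat \<Rightarrow> (nat \<Rightarrow> nat) \<Rightarrow> (nat \<Rightarrow> 'a::field) \<Rightarrow> nat \<Rightarrow> bool" where
  "mult_surjective n e c i \<longleftrightarrow>
     (\<forall>g \<in> graded_piece n e (Suc i). \<exists>f \<in> graded_piece n e i.
        \<forall>b \<in> mono_basis n e (Suc i). lin_mult n c f b = g b)"

definition has_WLP :: "'a::field itself \<Rightarrow> nat \<Rightarrow> (nat \<Rightarrow> nat) \<Rightarrow> bool" where
  "has_WLP _ n e \<longleftrightarrow>
     (\<exists>c :: nat \<Rightarrow> 'a. \<forall>i. mult_injective n e c i \<or> mult_surjective n e c i)"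

end

theory Submission
  imports Defs
begin

text \<open>Write the algebra as C[x_N]/(x_N^(e N)) with C = k[x_0..x_(N-1)]/(x_j^(e j)), whose socle
  monomial x^t has degree |t| = \<Sum>j<N. (e j - 1). Sorting coefficients by the exponent of x_N,
  multiplication by l = \<Sum>j. c j * x j (with c N \<noteq> 0) is triangular with diagonal c N; hence it is
  injective below degree e N - 1 and can always be solved on the monomials divisible by x_N. The
  only remaining coordinate that matters is x^t, and there the obstruction is an explicit kernel
  vector built from powers of L = \<Sum>j<N. c j * x j, whose image at x^t is, up to a unit, the
  multinomial coefficient of t times c^t. So with l = \<Sum>j. x j the weak Lefschetz property holds
  when that coefficient is nonzero in k. When it vanishes and e N = |t|, multiplication from
  degree e N - 1 is neither injective nor surjective for every l: for c N \<noteq> 0 by the kernel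
  vector, and for c N = 0 because l then misses x_N.\<close>

lemma (in comm_monoid_set) fun_upd_remove:
  assumes "finite A" "j \<in> A"
  shows "F (\<lambda>l. g l ((a(j := x)) l)) A = g j x \<^bold>* F (\<lambda>l. g l (a l)) (A - {j})"
proof -
  have "F (\<lambda>l. g l ((a(j := x)) l)) A = g j x \<^bold>* F (\<lambda>l. g l ((a(j := x)) l)) (A - {j})"
    using assms by (simp add: remove)
  also have "F (\<lambda>l. g l ((a(j := x)) l)) (A - {j}) = F (\<lambda>l. g l (a l)) (A - {j})"
    by (rule cong) auto
  finally show ?thesis .
qed

definition deg_below :: "nat \<Rightarrow> (nat \<Rightarrow> nat) \<Rightarrow> nat" where
  "deg_below N a = (\<Sum>j<N. a j)"

lemma deg_below_cong: "(\<And>j. j < N \<Longrightarrow> a j = a' j) \<Longrightarrow> deg_below N a = deg_below N a'"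
  unfolding deg_below_def by (rule sum.cong) auto

lemma deg_below_upd_last [simp]: "deg_below N (a(N := x)) = deg_below N a"
  by (rule deg_below_cong) auto

lemma deg_below_dec:
  assumes "j < N" "0 < a j"
  shows "Suc (deg_below N (a(j := a j - 1))) = deg_below N a"
proof -
  have "deg_below N (a(j := a j - 1)) = (a j - 1) + (\<Sum>l\<in>{..<N} - {j}. a l)"
    and "deg_below N a = a j + (\<Sum>l\<in>{..<N} - {j}. a l)"
    using sum.fun_upd_remove[of "{..<N}" j "\<lambda>_ x. x" a "a j - 1"]
      sum.fun_upd_remove[of "{..<N}" j "\<lambda>_ x. x" a "a j"] assms(1)
    by (simp_all add: deg_below_def)
  then show ?thesis using assms(2) by simp
qed

lemma deg_below_eq_0D: "deg_below N a = 0 \<Longrightarrow> j < N \<Longrightarrow> a j = 0"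
  unfolding deg_below_def by simp

lemma deg_below_mono: "(\<And>j. j < N \<Longrightarrow> b j \<le> t j) \<Longrightarrow> deg_below N b \<le> deg_below N t"
  unfolding deg_below_def by (rule sum_mono) auto

lemma deg_below_eq_imp_eq:
  assumes "\<And>j. j < N \<Longrightarrow> b j \<le> t j" "deg_below N t \<le> deg_below N b" "j < N"
  shows "b j = t j"
proof -
  have "deg_below N b = deg_below N t" using deg_below_mono[of N b t] assms(1,2) by simp
  then show ?thesis
    using sum_mono_inv[of b "{..<N}" t j] assms(1,3) unfolding deg_below_def by auto
qed

text \<open>The number of monotone lattice paths from 0 to a, meaningful for k = deg_below N a: the
  multinomial coefficient of a, defined without division.\<close>

fun lattice_paths :: "nat \<Rightarrow> nat \<Rightarrow> (nat \<Rightarrow> nat) \<Rightarrow> nat" where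
  "lattice_paths N 0 a = 1"
| "lattice_paths N (Suc k) a =
     (\<Sum>j<N. if 0 < a j then lattice_paths N k (a(j := a j - 1)) else 0)"

definition multinomial :: "nat \<Rightarrow> (nat \<Rightarrow> nat) \<Rightarrow> nat" where
  "multinomial N a = lattice_paths N (deg_below N a) a"

lemma multinomial_deg_0: "deg_below N a = 0 \<Longrightarrow> multinomial N a = 1"
  by (simp add: multinomial_def)

lemma multinomial_rec:
  assumes "0 < deg_below N a"
  shows "multinomial N a = (\<Sum>j<N. if 0 < a j then multinomial N (a(j := a j - 1)) else 0)"
proof -
  obtain k where k: "deg_below N a = Suc k" using assms by (cases "deg_below N a") auto
  have "multinomial N a = (\<Sum>j<N. if 0 < a j then lattice_paths N k (a(j := a j - 1)) else 0)"
    unfolding multinomial_def k by simp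
  also have "\<dots> = (\<Sum>j<N. if 0 < a j then multinomial N (a(j := a j - 1)) else 0)"
    by (rule sum.cong) (auto simp: multinomial_def k dest!: deg_below_dec[of _ N a])
  finally show ?thesis .
qed

lemma lattice_paths_cong:
  "(\<And>j. j < N \<Longrightarrow> a j = a' j) \<Longrightarrow> lattice_paths N k a = lattice_paths N k a'"
proof (induction k arbitrary: a a')
  case (Suc k)
  have "lattice_paths N k (a(j := a j - 1)) = lattice_paths N k (a'(j := a' j - 1))" if "j < N" for j
    by (rule Suc.IH) (use Suc.prems that in auto)
  then show ?case using Suc.prems unfolding lattice_paths.simps by (intro sum.cong) auto
qed simp

lemma multinomial_cong: "(\<And>j. j < N \<Longrightarrow> a j = a' j) \<Longrightarrow> multinomial N a = multinomial N a'"
  unfolding multinomial_def using deg_below_cong[of N a a'] lattice_paths_cong[of N a a'] by simp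

lemma lattice_paths_mult_fact:
  "deg_below N a = k \<Longrightarrow> lattice_paths N k a * (\<Prod>j<N. fact (a j)) = fact k"
proof (induction k arbitrary: a)
  case 0
  then show ?case by (simp add: deg_below_eq_0D)
next
  case (Suc k)
  have step: "(if 0 < a j then lattice_paths N k (a(j := a j - 1)) else 0) * (\<Prod>l<N. fact (a l))
      = a j * fact k" if j: "j < N" for j
  proof (cases "a j")
    case (Suc m)
    have "deg_below N (a(j := a j - 1)) = k" using deg_below_dec[of j N a] j Suc Suc.prems by simp
    note IH = Suc.IH[OF this]
    have P: "(\<Prod>l<N. fact (a l)) = a j * (fact m * (\<Prod>l\<in>{..<N}-{j}. fact (a l)))"
      using j Suc by (simp add: prod.remove algebra_simps)
    have P': "(\<Prod>l<N. fact ((a(j := a j - 1)) l)) = fact m * (\<Prod>l\<in>{..<N}-{j}. fact (a l))"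
      using prod.fun_upd_remove[of "{..<N}" j "\<lambda>_ x. fact x" a "a j - 1"] j Suc by simp
    have "lattice_paths N k (a(j := a j - 1)) * (\<Prod>l<N. fact (a l))
        = a j * (lattice_paths N k (a(j := a j - 1)) * (\<Prod>l<N. fact ((a(j := a j - 1)) l)))"
      unfolding P P' by (simp only: ac_simps)
    then have "lattice_paths N k (a(j := a j - 1)) * (\<Prod>l<N. fact (a l)) = a j * fact k"
      by (simp only: IH)
    then show ?thesis using Suc by simp
  qed simp
  have "lattice_paths N (Suc k) a * (\<Prod>j<N. fact (a j)) = (\<Sum>j<N. a j * fact k)"
    unfolding lattice_paths.simps sum_distrib_right by (intro sum.cong refl step) simp
  also have "\<dots> = Suc k * fact k"
    using Suc.prems by (simp add: deg_below_def sum_distrib_right[symmetric])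
  finally show ?case by simp
qed

lemma multinomial_eq_fact_div:
  "multinomial N a = fact (deg_below N a) div (\<Prod>j<N. fact (a j))"
proof -
  have "fact (deg_below N a) = multinomial N a * (\<Prod>j<N. fact (a j))"
    using lattice_paths_mult_fact unfolding multinomial_def by metis
  then show ?thesis by simp
qed

lemma multinomial_single_support:
  assumes "\<And>j. j < N \<Longrightarrow> j \<noteq> k \<Longrightarrow> a j = 0"
  shows "multinomial N a = 1"
proof -
  have "lattice_paths N t a = 1" if "deg_below N a = t" "\<And>j. j < N \<Longrightarrow> j \<noteq> k \<Longrightarrow> a j = 0" for t a
    using that
  proof (induction t arbitrary: a)
    case (Suc t)
    have kN: "k < N \<and> 0 < a k"
    proof (rule ccontr)
      assume "\<not> (k < N \<and> 0 < a k)"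
      then have "deg_below N a = 0" using Suc.prems(2) by (auto simp: deg_below_def)
      then show False using Suc.prems(1) by simp
    qed
    have "deg_below N (a(k := a k - 1)) = t" using deg_below_dec[of k N a] kN Suc.prems by simp
    then have "lattice_paths N t (a(k := a k - 1)) = 1" by (rule Suc.IH) (use Suc.prems in auto)
    then have "lattice_paths N (Suc t) a = (\<Sum>j<N. if j = k then 1 else 0)"
      unfolding lattice_paths.simps using Suc.prems kN by (intro sum.cong) auto
    then show ?case using kN by simp
  qed simp
  then show ?thesis unfolding multinomial_def using assms by blast
qed

lemma multinomial_ne_1_two_support:
  assumes "multinomial N t \<noteq> 1"
  obtains i1 i2 where "i1 < N" "i2 < N" "i1 \<noteq> i2" "0 < t i1" "0 < t i2"
proof -
  have "\<exists>k. \<forall>j<N. j \<noteq> k \<longrightarrow> t j = 0" if "\<not> (\<exists>i1 i2. i1 < N \<and> i2 < N \<and> i1 \<noteq> i2 \<and> 0 < t i1 \<and> 0 < t i2)"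
    using that by (metis gr0I)
  with assms multinomial_single_support that show ?thesis by blast
qed

definition monomial_at :: "nat \<Rightarrow> (nat \<Rightarrow> 'a::comm_monoid_mult) \<Rightarrow> (nat \<Rightarrow> nat) \<Rightarrow> 'a" where
  "monomial_at N c a = (\<Prod>j<N. c j ^ a j)"

lemma monomial_at_cong: "(\<And>j. j < N \<Longrightarrow> a j = a' j) \<Longrightarrow> monomial_at N c a = monomial_at N c a'"
  unfolding monomial_at_def by (rule prod.cong) auto

lemma monomial_at_dec:
  assumes "j < N" "0 < a j"
  shows "c j * monomial_at N c (a(j := a j - 1)) = monomial_at N c a"
proof -
  obtain m where m: "a j = Suc m" using assms by (cases "a j") auto
  have "monomial_at N c (a(j := a j - 1)) = c j ^ m * (\<Prod>l\<in>{..<N}-{j}. c l ^ a l)"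
    using prod.fun_upd_remove[of "{..<N}" j "\<lambda>l x. c l ^ x" a "a j - 1"] assms(1) m
    by (simp add: monomial_at_def)
  moreover have "monomial_at N c a = c j ^ a j * (\<Prod>l\<in>{..<N}-{j}. c l ^ a l)"
    using assms(1) by (simp add: monomial_at_def prod.remove)
  ultimately show ?thesis using m by (simp add: mult.assoc)
qed

text \<open>multinomial N a * monomial_at N c a is the coefficient of x^a in (\<Sum>j<N. c j * x j)^|a|.\<close>

lemma multinomial_monomial_rec:
  fixes c :: "nat \<Rightarrow> 'a::comm_semiring_1"
  assumes "0 < deg_below N b"
  shows "(\<Sum>j<N. if 0 < b j then c j * (of_nat (multinomial N (b(j := b j - 1)))
             * monomial_at N c (b(j := b j - 1))) else 0)
       = of_nat (multinomial N b) * monomial_at N c b"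
proof -
  have "(\<Sum>j<N. if 0 < b j then c j * (of_nat (multinomial N (b(j := b j - 1)))
             * monomial_at N c (b(j := b j - 1))) else 0)
      = (\<Sum>j<N. of_nat (if 0 < b j then multinomial N (b(j := b j - 1)) else 0) * monomial_at N c b)"
    by (rule sum.cong) (auto simp flip: monomial_at_dec simp: algebra_simps)
  also have "\<dots> = of_nat (multinomial N b) * monomial_at N c b"
    by (subst multinomial_rec[OF assms]) (simp only: of_nat_sum sum_distrib_right)
  finally show ?thesis .
qed

lemma mono_basis_Suc_iff:
  "a \<in> mono_basis (Suc N) e i \<longleftrightarrow>
     (\<forall>j>N. a j = 0) \<and> (\<forall>j\<le>N. a j < e j) \<and> deg_below N a + a N = i"
  unfolding mono_basis_def deg_below_def by (auto simp: less_Suc_eq_le)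

lemma mono_basis_dec:
  assumes "b \<in> mono_basis (Suc N) e (Suc i)" "j \<le> N" "0 < b j"
  shows "b(j := b j - 1) \<in> mono_basis (Suc N) e i"
proof (cases "j = N")
  case False
  then have "Suc (deg_below N (b(j := b j - 1))) = deg_below N b"
    using deg_below_dec[of j N b] assms(2,3) by simp
  moreover have "(b(j := b j - 1)) l < e l" if "l \<le> N" for l
    using assms(1) that by (cases "l = j") (auto simp: mono_basis_Suc_iff)
  ultimately show ?thesis using assms False unfolding mono_basis_Suc_iff by auto
qed (use assms in \<open>auto simp: mono_basis_Suc_iff\<close>)

lemma mono_basis_inc_last:
  assumes "a \<in> mono_basis (Suc N) e i" "Suc (a N) < e N"
  shows "a(N := Suc (a N)) \<in> mono_basis (Suc N) e (Suc i)"
  using assms unfolding mono_basis_Suc_iff by auto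

lemma lin_mult_Suc:
  "lin_mult (Suc N) c f b =
     (\<Sum>j<N. if 0 < b j then c j * f (b(j := b j - 1)) else 0)
     + (if 0 < b N then c N * f (b(N := b N - 1)) else 0)"
  unfolding lin_mult_def by simp

lemma lin_mult_add: "lin_mult n c (\<lambda>a. f a + h a) b = lin_mult n c f b + lin_mult n c h b"
  unfolding lin_mult_def sum.distrib[symmetric] by (rule sum.cong) (auto simp: algebra_simps)

lemma lin_mult_add_scaled:
  "lin_mult n c (\<lambda>a. f a + t * h a) b = lin_mult n c f b + t * lin_mult n c h b"
  unfolding lin_mult_def sum_distrib_left sum.distrib[symmetric]
  by (rule sum.cong) (auto simp: algebra_simps)

lemma lin_mult_scaled: "(\<And>a. f a = t * h a) \<Longrightarrow> lin_mult n c f b = t * lin_mult n c h b"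
  unfolding lin_mult_def sum_distrib_left by (rule sum.cong) (auto simp: algebra_simps)

lemma graded_piece_add_scaled:
  "f \<in> graded_piece n e i \<Longrightarrow> h \<in> graded_piece n e i \<Longrightarrow> (\<lambda>a. f a + t * h a) \<in> graded_piece n e i"
  unfolding graded_piece_def by auto

text \<open>The coefficient of l f at x^b with b N > 0 is c N * f (b - e_N) plus coefficients of f with
  a larger exponent of x_N; descend on that exponent.\<close>

lemma graded_piece_eq_0_by_last_exponent:
  fixes c :: "nat \<Rightarrow> 'k::field"
  assumes cN: "c N \<noteq> 0" and f: "f \<in> graded_piece (Suc N) e i"
    and lf: "\<And>b. b \<in> mono_basis (Suc N) e (Suc i) \<Longrightarrow> 0 < b N \<Longrightarrow> lin_mult (Suc N) c f b = 0"
    and top: "\<And>a. a \<in> mono_basis (Suc N) e i \<Longrightarrow> Suc (a N) = e N \<Longrightarrow> f a = 0"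
  shows "f a = 0"
proof (induction "e N - a N" arbitrary: a rule: less_induct)
  case less
  show ?case
  proof (cases "a \<in> mono_basis (Suc N) e i \<and> Suc (a N) < e N")
    case False
    show ?thesis
    proof (cases "a \<in> mono_basis (Suc N) e i")
      case True
      then have "Suc (a N) = e N" using False by (auto simp: mono_basis_Suc_iff)
      with True show ?thesis by (rule top)
    qed (use f in \<open>simp add: graded_piece_def\<close>)
  next
    case True
    define b where "b = a(N := Suc (a N))"
    have b: "b \<in> mono_basis (Suc N) e (Suc i)" "b N = Suc (a N)" "b(N := b N - 1) = a"
      using mono_basis_inc_last True by (auto simp: b_def)
    have "f (b(j := b j - 1)) = 0" if "j < N" for j
      by (rule less.hyps) (use that b True in auto)
    then have "(\<Sum>j<N. if 0 < b j then c j * f (b(j := b j - 1)) else 0) = 0"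
      by (intro sum.neutral) auto
    then have "lin_mult (Suc N) c f b = c N * f a"
      unfolding lin_mult_Suc using b by simp
    then show ?thesis using lf[OF b(1)] b(2) cN by simp
  qed
qed

lemma lin_mult_solvable_last_step:
  fixes c :: "nat \<Rightarrow> 'k::field"
  assumes cN: "c N \<noteq> 0" and f: "f \<in> graded_piece (Suc N) e i"
    and hf: "\<And>b. b \<in> mono_basis (Suc N) e (Suc i) \<Longrightarrow> 0 < b N \<Longrightarrow> e N \<le> b N + k
      \<Longrightarrow> lin_mult (Suc N) c f b = g b"
  obtains f' where "f' \<in> graded_piece (Suc N) e i"
    "\<And>b. b \<in> mono_basis (Suc N) e (Suc i) \<Longrightarrow> 0 < b N \<Longrightarrow> e N \<le> b N + Suc k
      \<Longrightarrow> lin_mult (Suc N) c f' b = g b"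
proof -
  text \<open>Correct f on the monomials whose last exponent is e N - k - 2, which affect the
    equations with last exponent e N - k - 1 only through the term c N * f a.\<close>
  define f' where "f' a = f a + (if a \<in> mono_basis (Suc N) e i \<and> a N + 2 + k = e N
      then (g (a(N := Suc (a N))) - lin_mult (Suc N) c f (a(N := Suc (a N)))) / c N else 0)" for a
  have "f' \<in> graded_piece (Suc N) e i" using f unfolding graded_piece_def f'_def by auto
  moreover have "lin_mult (Suc N) c f' b = g b" if bB: "b \<in> mono_basis (Suc N) e (Suc i)"
    and bN: "0 < b N" and le: "e N \<le> b N + Suc k" for b
  proof -
    define a where "a = b(N := b N - 1)"
    have aB: "a \<in> mono_basis (Suc N) e i" unfolding a_def using mono_basis_dec[OF bB _ bN] by simp
    have ab: "a(N := Suc (a N)) = b" and aN: "a N = b N - 1" unfolding a_def using bN by auto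
    have "(\<Sum>j<N. if 0 < b j then c j * f' (b(j := b j - 1)) else 0)
        = (\<Sum>j<N. if 0 < b j then c j * f (b(j := b j - 1)) else 0)"
      using le unfolding f'_def by (intro sum.cong) auto
    then have split: "lin_mult (Suc N) c f' b = lin_mult (Suc N) c f b + c N * (f' a - f a)"
      unfolding lin_mult_Suc a_def using bN by (simp add: algebra_simps)
    show ?thesis
    proof (cases "e N \<le> b N + k")
      case True
      then have "f' a = f a" unfolding f'_def using aN bN by auto
      then show ?thesis using split hf bB bN True by simp
    next
      case False
      then have "f' a - f a = (g b - lin_mult (Suc N) c f b) / c N"
        unfolding f'_def using aB aN ab le bN by simp
      then show ?thesis using split cN by simp
    qed
  qed
  ultimately show ?thesis by (rule that)
qed

lemma lin_mult_solvable_last_positive: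
  fixes c :: "nat \<Rightarrow> 'k::field"
  assumes cN: "c N \<noteq> 0"
  obtains f where "f \<in> graded_piece (Suc N) e i"
    "\<And>b. b \<in> mono_basis (Suc N) e (Suc i) \<Longrightarrow> 0 < b N \<Longrightarrow> lin_mult (Suc N) c f b = g b"
proof -
  have "\<exists>f\<in>graded_piece (Suc N) e i. \<forall>b\<in>mono_basis (Suc N) e (Suc i).
          0 < b N \<and> e N \<le> b N + k \<longrightarrow> lin_mult (Suc N) c f b = g b" for k
  proof (induction k)
    case 0
    have "(\<lambda>_. 0) \<in> graded_piece (Suc N) e i" unfolding graded_piece_def by simp
    moreover have "\<not> e N \<le> b N" if "b \<in> mono_basis (Suc N) e (Suc i)" for b
      using that by (simp add: mono_basis_Suc_iff not_le)
    ultimately show ?case by auto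
  next
    case (Suc k)
    then obtain f where "f \<in> graded_piece (Suc N) e i"
      "\<And>b. b \<in> mono_basis (Suc N) e (Suc i) \<Longrightarrow> 0 < b N \<Longrightarrow> e N \<le> b N + k
        \<Longrightarrow> lin_mult (Suc N) c f b = g b"
      by blast
    then show ?case
      by (rule lin_mult_solvable_last_step[where c=c and N=N, OF cN]) auto
  qed
  from this[of "e N"] that show ?thesis by auto
qed

text \<open>With L = \<Sum>j<N. c j * x j and q = Suc i - e N, the kernel vector is
  \<Sum>m. (-1 / c N)^(m - q) * L^m * x_N^(i - m). Multiplying by l = L + c N * x_N telescopes, since
  x_N^(e N) = 0, leaving only (-1 / c N)^(e N - 1) * L^(Suc i).\<close>

definition kernel_vector :: "nat \<Rightarrow> (nat \<Rightarrow> nat) \<Rightarrow> (nat \<Rightarrow> 'k::field) \<Rightarrow> nat \<Rightarrow> (nat \<Rightarrow> nat) \<Rightarrow> 'k" where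
  "kernel_vector N e c i a = (if a \<in> mono_basis (Suc N) e i
     then (-1 / c N) ^ (deg_below N a - (Suc i - e N)) * (of_nat (multinomial N a) * monomial_at N c a)
     else 0)"

lemma kernel_vector_in_graded_piece: "kernel_vector N e c i \<in> graded_piece (Suc N) e i"
  unfolding graded_piece_def kernel_vector_def by auto

lemma kernel_vector_lower_sum:
  fixes c :: "nat \<Rightarrow> 'k::field"
  assumes bB: "b \<in> mono_basis (Suc N) e (Suc i)" and deg: "Suc i - e N < deg_below N b"
  shows "(\<Sum>j<N. if 0 < b j then c j * kernel_vector N e c i (b(j := b j - 1)) else 0)
       = (-1 / c N) ^ (deg_below N b - Suc (Suc i - e N)) * (of_nat (multinomial N b) * monomial_at N c b)"
proof -
  let ?K = "deg_below N b - Suc (Suc i - e N)"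
  have "(\<Sum>j<N. if 0 < b j then c j * kernel_vector N e c i (b(j := b j - 1)) else 0)
      = (\<Sum>j<N. (-1 / c N) ^ ?K * (if 0 < b j then c j * (of_nat (multinomial N (b(j := b j - 1)))
           * monomial_at N c (b(j := b j - 1))) else 0))"
  proof (rule sum.cong)
    fix j assume j: "j \<in> {..<N}"
    show "(if 0 < b j then c j * kernel_vector N e c i (b(j := b j - 1)) else 0)
        = (-1 / c N) ^ ?K * (if 0 < b j then c j * (of_nat (multinomial N (b(j := b j - 1)))
           * monomial_at N c (b(j := b j - 1))) else 0)"
    proof (cases "0 < b j")
      case True
      have "b(j := b j - 1) \<in> mono_basis (Suc N) e i" using mono_basis_dec[OF bB _ True] j by simp
      moreover have "Suc (deg_below N (b(j := b j - 1))) = deg_below N b"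
        using deg_below_dec[of j N b] j True by simp
      then have "deg_below N (b(j := b j - 1)) - (Suc i - e N) = ?K" by simp
      ultimately show ?thesis using True deg unfolding kernel_vector_def by (simp add: algebra_simps)
    qed simp
  qed simp
  also have "\<dots> = (-1 / c N) ^ ?K * (of_nat (multinomial N b) * monomial_at N c b)"
    using deg by (simp add: sum_distrib_left[symmetric] multinomial_monomial_rec)
  finally show ?thesis .
qed

lemma lin_mult_kernel_vector_last_pos:
  fixes c :: "nat \<Rightarrow> 'k::field"
  assumes cN: "c N \<noteq> 0" and ei: "e N \<le> Suc i"
    and bB: "b \<in> mono_basis (Suc N) e (Suc i)" and bN: "0 < b N"
  shows "lin_mult (Suc N) c (kernel_vector N e c i) b = 0"
proof -
  define K where "K = deg_below N b - Suc (Suc i - e N)"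
  define X where "X = of_nat (multinomial N b) * monomial_at N c b"
  have "deg_below N b + b N = Suc i" "b N < e N" using bB by (simp_all add: mono_basis_Suc_iff)
  then have deg: "Suc i - e N < deg_below N b" using ei by linarith
  have "kernel_vector N e c i (b(N := b N - 1)) = (-1 / c N) ^ Suc K * X"
  proof -
    have "b(N := b N - 1) \<in> mono_basis (Suc N) e i" using mono_basis_dec[OF bB _ bN] by simp
    moreover have "multinomial N (b(N := b N - 1)) = multinomial N b"
      and "monomial_at N c (b(N := b N - 1)) = monomial_at N c b"
      by (auto intro: multinomial_cong monomial_at_cong)
    ultimately show ?thesis using deg unfolding kernel_vector_def K_def X_def
      by (simp add: Suc_diff_Suc)
  qed
  then have "lin_mult (Suc N) c (kernel_vector N e c i) b = (-1 / c N) ^ K * X + c N * ((-1 / c N) ^ Suc K * X)"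
    unfolding lin_mult_Suc kernel_vector_lower_sum[OF bB deg] using bN by (simp add: K_def X_def)
  also have "\<dots> = 0" using cN by (simp add: field_simps)
  finally show ?thesis .
qed

lemma lin_mult_kernel_vector_last_0:
  fixes c :: "nat \<Rightarrow> 'k::field"
  assumes ei: "e N \<le> Suc i" and e1: "0 < e N"
    and bB: "b \<in> mono_basis (Suc N) e (Suc i)" and bN: "b N = 0"
  shows "lin_mult (Suc N) c (kernel_vector N e c i) b
       = (-1 / c N) ^ (e N - 1) * (of_nat (multinomial N b) * monomial_at N c b)"
proof -
  have "deg_below N b = Suc i" using bB bN unfolding mono_basis_Suc_iff by auto
  then show ?thesis
    unfolding lin_mult_Suc using kernel_vector_lower_sum[OF bB] bN ei e1 by (simp add: Suc_diff_le)
qed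

definition top_exp :: "nat \<Rightarrow> (nat \<Rightarrow> nat) \<Rightarrow> nat \<Rightarrow> nat" where
  "top_exp N e = (\<lambda>j. if j < N then e j - 1 else 0)"

definition corner_exp :: "nat \<Rightarrow> (nat \<Rightarrow> nat) \<Rightarrow> nat \<Rightarrow> nat" where
  "corner_exp N e = (\<lambda>j. if j = N then e N - 1 else 0)"

lemma deg_below_top_exp: "deg_below N (top_exp N e) = (\<Sum>j<N. e j - 1)"
  unfolding deg_below_def top_exp_def by (rule sum.cong) auto

lemma mono_basis_le_top_exp: "b \<in> mono_basis (Suc N) e k \<Longrightarrow> j < N \<Longrightarrow> b j \<le> top_exp N e j"
  unfolding mono_basis_Suc_iff top_exp_def by (auto simp: less_Suc_eq_le dest: spec[where x=j])

lemma top_exp_in_mono_basis: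
  assumes "\<forall>j<N. 0 < e j" "0 < e N" "deg_below N (top_exp N e) = k"
  shows "top_exp N e \<in> mono_basis (Suc N) e k"
  unfolding mono_basis_Suc_iff using assms by (auto simp: top_exp_def)

lemma eq_top_exp:
  assumes "b \<in> mono_basis (Suc N) e k" "b N = 0" "deg_below N (top_exp N e) \<le> deg_below N b"
  shows "b = top_exp N e"
proof
  fix j
  have "b j = top_exp N e j" if "j < N"
    by (rule deg_below_eq_imp_eq[OF mono_basis_le_top_exp[OF assms(1)] assms(3) that])
  then show "b j = top_exp N e j" using assms(1,2) unfolding mono_basis_Suc_iff top_exp_def
    by (cases "j < N"; cases "j = N") auto
qed

lemma corner_exp_in_mono_basis:
  "\<forall>j<N. 0 < e j \<Longrightarrow> Suc i = e N \<Longrightarrow> corner_exp N e \<in> mono_basis (Suc N) e i"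
  unfolding mono_basis_Suc_iff corner_exp_def deg_below_def by auto

lemma eq_corner_exp:
  assumes "a \<in> mono_basis (Suc N) e i" "Suc (a N) = e N" "Suc i = e N"
  shows "a = corner_exp N e"
proof
  fix j
  have "deg_below N a = 0" and "\<forall>j>N. a j = 0" using assms unfolding mono_basis_Suc_iff by auto
  then show "a j = corner_exp N e j" using deg_below_eq_0D[of N a j] assms(2) unfolding corner_exp_def
    by (cases "j < N"; cases "j = N") auto
qed

lemma kernel_vector_corner:
  assumes "corner_exp N e \<in> mono_basis (Suc N) e i"
  shows "kernel_vector N e c i (corner_exp N e) = 1"
proof -
  have "deg_below N (corner_exp N e) = 0" by (simp add: deg_below_def corner_exp_def)
  then show ?thesis using assms
    by (simp add: kernel_vector_def multinomial_deg_0 monomial_at_def corner_exp_def)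
qed

lemma mult_injective_last_exp_0: "e N = 0 \<Longrightarrow> mult_injective (Suc N) e c i"
  unfolding mult_injective_def graded_piece_def mono_basis_Suc_iff by auto

lemma mult_injective_below:
  fixes c :: "nat \<Rightarrow> 'k::field"
  assumes cN: "c N \<noteq> 0" and lt: "Suc i < e N"
  shows "mult_injective (Suc N) e c i"
  unfolding mult_injective_def
proof (intro ballI impI allI)
  fix f :: "(nat \<Rightarrow> nat) \<Rightarrow> 'k" and a
  assume "f \<in> graded_piece (Suc N) e i" "\<forall>b\<in>mono_basis (Suc N) e (Suc i). lin_mult (Suc N) c f b = 0"
  moreover have "f a = 0" if "a \<in> mono_basis (Suc N) e i" "Suc (a N) = e N" for a
    using that lt by (simp add: mono_basis_Suc_iff)
  ultimately show "f a = 0" using graded_piece_eq_0_by_last_exponent[where c=c and N=N, OF cN] by blast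
qed

lemma kernel_eq_scaled_kernel_vector:
  fixes c :: "nat \<Rightarrow> 'k::field"
  assumes cN: "c N \<noteq> 0" and ie: "Suc i = e N" and f: "f \<in> graded_piece (Suc N) e i"
    and lf: "\<And>b. b \<in> mono_basis (Suc N) e (Suc i) \<Longrightarrow> 0 < b N \<Longrightarrow> lin_mult (Suc N) c f b = 0"
  shows "f a = f (corner_exp N e) * kernel_vector N e c i a"
proof -
  define g where "g = (\<lambda>a. f a + (- f (corner_exp N e)) * kernel_vector N e c i a)"
  have "g a = 0"
  proof (rule graded_piece_eq_0_by_last_exponent[where c=c and N=N and e=e and i=i and f=g, OF cN])
    show "g \<in> graded_piece (Suc N) e i"
      unfolding g_def by (rule graded_piece_add_scaled[OF f kernel_vector_in_graded_piece])
    show "lin_mult (Suc N) c g b = 0" if "b \<in> mono_basis (Suc N) e (Suc i)" "0 < b N" for b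
      using that lf lin_mult_kernel_vector_last_pos[where c=c and N=N, OF cN _ that] ie
      unfolding g_def lin_mult_add_scaled by simp
    show "g a = 0" if "a \<in> mono_basis (Suc N) e i" "Suc (a N) = e N" for a
    proof -
      have "a = corner_exp N e" using eq_corner_exp that ie by blast
      moreover have "kernel_vector N e c i (corner_exp N e) = 1"
        by (rule kernel_vector_corner) (use that(1) \<open>a = corner_exp N e\<close> in simp)
      ultimately show ?thesis unfolding g_def by simp
    qed
  qed
  then show ?thesis unfolding g_def by simp
qed

lemma mult_injective_middle:
  fixes c :: "nat \<Rightarrow> 'k::field"
  assumes cN: "c N \<noteq> 0" and ie: "Suc i = e N"
    and bB: "b \<in> mono_basis (Suc N) e (Suc i)" and bN: "b N = 0"
    and nz: "of_nat (multinomial N b) * monomial_at N c b \<noteq> 0"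
  shows "mult_injective (Suc N) e c i"
  unfolding mult_injective_def
proof (intro ballI impI allI)
  fix f :: "(nat \<Rightarrow> nat) \<Rightarrow> 'k" and a
  assume f: "f \<in> graded_piece (Suc N) e i"
    and lf: "\<forall>b\<in>mono_basis (Suc N) e (Suc i). lin_mult (Suc N) c f b = 0"
  have fa: "f a = f (corner_exp N e) * kernel_vector N e c i a" for a
    by (rule kernel_eq_scaled_kernel_vector[where c=c and N=N, OF cN ie f]) (use lf in blast)
  have "0 = lin_mult (Suc N) c f b" using lf bB by simp
  also have "\<dots> = f (corner_exp N e) * lin_mult (Suc N) c (kernel_vector N e c i) b"
    by (rule lin_mult_scaled[OF fa])
  also have "\<dots> = f (corner_exp N e) * ((-1 / c N) ^ (e N - 1)
      * (of_nat (multinomial N b) * monomial_at N c b))"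
    using lin_mult_kernel_vector_last_0[where c=c, OF _ _ bB bN] ie by simp
  finally have "f (corner_exp N e) = 0" using nz cN by (simp only: mult_eq_0_iff power_eq_0_iff) simp
  then show "f a = 0" using fa[of a] by (simp only: mult_zero_left)
qed

lemma mult_surjective_above:
  fixes c :: "nat \<Rightarrow> 'k::field"
  assumes cN: "c N \<noteq> 0" and gt: "deg_below N (top_exp N e) < Suc i"
  shows "mult_surjective (Suc N) e c i"
  unfolding mult_surjective_def
proof
  fix g :: "(nat \<Rightarrow> nat) \<Rightarrow> 'k"
  obtain f where "f \<in> graded_piece (Suc N) e i"
    "\<And>b. b \<in> mono_basis (Suc N) e (Suc i) \<Longrightarrow> 0 < b N \<Longrightarrow> lin_mult (Suc N) c f b = g b"
    using lin_mult_solvable_last_positive[where c=c and N=N, OF cN] by blast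
  moreover have "0 < b N" if "b \<in> mono_basis (Suc N) e (Suc i)" for b
    using that gt deg_below_mono[of N b "top_exp N e"] mono_basis_le_top_exp[OF that]
    by (simp add: mono_basis_Suc_iff)
  ultimately show "\<exists>f\<in>graded_piece (Suc N) e i.
      \<forall>b\<in>mono_basis (Suc N) e (Suc i). lin_mult (Suc N) c f b = g b" by blast
qed

text \<open>In degree deg_below N (top_exp N e) the only equation not solved by
  lin_mult_solvable_last_positive is the one at the top monomial; the kernel vector adjusts it
  without disturbing the others.\<close>

lemma mult_surjective_at_top:
  fixes c :: "nat \<Rightarrow> 'k::field"
  assumes cN: "c N \<noteq> 0" and epos: "\<forall>j<N. 0 < e j"
    and ei: "e N \<le> Suc i" and e1: "0 < e N" and top: "deg_below N (top_exp N e) = Suc i"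
    and nz: "of_nat (multinomial N (top_exp N e)) * monomial_at N c (top_exp N e) \<noteq> 0"
  shows "mult_surjective (Suc N) e c i"
  unfolding mult_surjective_def
proof
  fix g :: "(nat \<Rightarrow> nat) \<Rightarrow> 'k"
  let ?t = "top_exp N e" and ?H = "kernel_vector N e c i"
  obtain F where F: "F \<in> graded_piece (Suc N) e i"
    "\<And>b. b \<in> mono_basis (Suc N) e (Suc i) \<Longrightarrow> 0 < b N \<Longrightarrow> lin_mult (Suc N) c F b = g b"
    using lin_mult_solvable_last_positive[where c=c and N=N, OF cN] by blast
  have tB: "?t \<in> mono_basis (Suc N) e (Suc i)" by (rule top_exp_in_mono_basis[OF epos e1 top])
  have "lin_mult (Suc N) c ?H ?t
      = (-1 / c N) ^ (e N - 1) * (of_nat (multinomial N ?t) * monomial_at N c ?t)"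
    by (rule lin_mult_kernel_vector_last_0[OF ei e1 tB]) (simp add: top_exp_def)
  then have v0: "lin_mult (Suc N) c ?H ?t \<noteq> 0" using cN nz by simp
  define f where "f a = F a + (g ?t - lin_mult (Suc N) c F ?t) / lin_mult (Suc N) c ?H ?t * ?H a" for a
  have "f \<in> graded_piece (Suc N) e i"
    unfolding f_def by (rule graded_piece_add_scaled[OF F(1) kernel_vector_in_graded_piece])
  moreover have "lin_mult (Suc N) c f b = g b" if bB: "b \<in> mono_basis (Suc N) e (Suc i)" for b
  proof (cases "0 < b N")
    case True
    then show ?thesis using F(2)[OF bB] lin_mult_kernel_vector_last_pos[where c=c and N=N, OF cN ei bB True]
      unfolding f_def lin_mult_add_scaled by simp
  next
    case False
    then have "b = ?t" using eq_top_exp[OF bB] top bB by (simp add: mono_basis_Suc_iff)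
    then show ?thesis using v0 unfolding f_def lin_mult_add_scaled by simp
  qed
  ultimately show "\<exists>f\<in>graded_piece (Suc N) e i.
      \<forall>b\<in>mono_basis (Suc N) e (Suc i). lin_mult (Suc N) c f b = g b" by blast
qed

lemma multinomial_dec_nonzero:
  assumes nz: "of_nat (multinomial N a) \<noteq> (0::'a::semiring_1)" and deg: "0 < deg_below N a"
  obtains j where "j < N" "0 < a j" "of_nat (multinomial N (a(j := a j - 1))) \<noteq> (0::'a)"
proof -
  have "of_nat (multinomial N a)
      = (\<Sum>j<N. of_nat (if 0 < a j then multinomial N (a(j := a j - 1)) else 0) :: 'a)"
    by (subst multinomial_rec[OF deg]) (simp only: of_nat_sum)
  with nz have "(\<Sum>j<N. of_nat (if 0 < a j then multinomial N (a(j := a j - 1)) else 0)) \<noteq> (0::'a)"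
    by simp
  then obtain j where "j < N" "of_nat (if 0 < a j then multinomial N (a(j := a j - 1)) else 0) \<noteq> (0::'a)"
    by (meson lessThan_iff sum.neutral)
  then show ?thesis using that by (cases "0 < a j") auto
qed

lemma has_WLP_balanced:
  assumes epos: "\<forall>j<N. 0 < e j" and eN: "e N = deg_below N (top_exp N e)"
    and nz: "of_nat (multinomial N (top_exp N e)) \<noteq> (0::'k::field)"
  shows "has_WLP TYPE('k) (Suc N) e"
  unfolding has_WLP_def
proof (intro exI allI)
  fix i
  let ?c = "\<lambda>_. 1::'k"
  consider "e N = 0" | "0 < e N" "Suc i < e N" | "0 < e N" "Suc i = e N" | "e N < Suc i" by linarith
  then show "mult_injective (Suc N) e ?c i \<or> mult_surjective (Suc N) e ?c i"
  proof cases
    case 1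
    then show ?thesis using mult_injective_last_exp_0 by blast
  next
    case 2
    then show ?thesis using mult_injective_below[of ?c N] by simp
  next
    case 3
    have "mult_injective (Suc N) e ?c i"
      by (rule mult_injective_middle[where b="top_exp N e"])
        (use 3 epos eN nz top_exp_in_mono_basis in \<open>auto simp: top_exp_def monomial_at_def\<close>)
    then show ?thesis ..
  next
    case 4
    then show ?thesis using mult_surjective_above[of ?c N] eN by simp
  qed
qed

lemma has_WLP_shortened:
  assumes epos: "\<forall>j<N. 0 < e j" and eN: "Suc (e N) = deg_below N (top_exp N e)"
    and nz: "of_nat (multinomial N (top_exp N e)) \<noteq> (0::'k::field)"
  shows "has_WLP TYPE('k) (Suc N) e"
  unfolding has_WLP_def
proof (intro exI allI)
  fix i
  let ?c = "\<lambda>_. 1::'k" and ?t = "top_exp N e"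
  consider "e N = 0" | "0 < e N" "Suc i < e N" | "0 < e N" "Suc i = e N" | "0 < e N" "Suc i = Suc (e N)"
    | "Suc (e N) < Suc i" by linarith
  then show "mult_injective (Suc N) e ?c i \<or> mult_surjective (Suc N) e ?c i"
  proof cases
    case 3
    text \<open>The top monomial itself lies one degree too high; one step of the Pascal recursion
      gives a monomial of the right degree with nonzero multinomial coefficient.\<close>
    obtain j where j: "j < N" "0 < ?t j" "of_nat (multinomial N (?t(j := ?t j - 1))) \<noteq> (0::'k)"
      using multinomial_dec_nonzero[OF nz] eN by auto
    have "?t \<in> mono_basis (Suc N) e (Suc (e N))"
      by (rule top_exp_in_mono_basis) (use epos 3 eN in auto)
    then have "?t(j := ?t j - 1) \<in> mono_basis (Suc N) e (Suc i)"
      using mono_basis_dec[of ?t N e "e N" j] j 3 by simp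
    then have "mult_injective (Suc N) e ?c i"
      by (rule mult_injective_middle[where c="?c" and N=N and e=e and i=i, OF one_neq_zero 3(2)]) (use j in \<open>auto simp: top_exp_def monomial_at_def\<close>)
    then show ?thesis ..
  next
    case 4
    then have "mult_surjective (Suc N) e ?c i"
      by (intro mult_surjective_at_top) (use epos eN nz in \<open>auto simp: monomial_at_def\<close>)
    then show ?thesis ..
  next
    case 5
    then show ?thesis using mult_surjective_above[of ?c N] eN by simp
  qed (use mult_injective_last_exp_0[of e N ?c] mult_injective_below[of ?c N] in simp_all)
qed

lemma lin_mult_indicator:
  assumes "x < n" "0 < b x"
  shows "lin_mult n c (\<lambda>a. if a = b(x := b x - 1) then t else 0) b = c x * t"
proof -
  have "b(j := b j - 1) \<noteq> b(x := b x - 1)" if "j \<noteq> x" "0 < b j" for j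
  proof
    assume "b(j := b j - 1) = b(x := b x - 1)"
    then have "(b(j := b j - 1)) j = (b(x := b x - 1)) j" by simp
    with that show False by simp
  qed
  then have "lin_mult n c (\<lambda>a. if a = b(x := b x - 1) then t else 0) b
      = (\<Sum>j<n. if j = x then c x * t else 0)"
    unfolding lin_mult_def using assms(2) by (intro sum.cong) auto
  then show ?thesis using assms(1) by simp
qed

lemma kernel_vector_in_kernel:
  fixes c :: "nat \<Rightarrow> 'k::field"
  assumes cN: "c N \<noteq> 0" and ie: "Suc i = e N" and eN: "e N = deg_below N (top_exp N e)"
    and z: "of_nat (multinomial N (top_exp N e)) = (0::'k)"
    and bB: "b \<in> mono_basis (Suc N) e (Suc i)"
  shows "lin_mult (Suc N) c (kernel_vector N e c i) b = 0"
proof (cases "0 < b N")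
  case True
  then show ?thesis using lin_mult_kernel_vector_last_pos[where c=c and N=N, OF cN _ bB] ie by simp
next
  case False
  then have "b = top_exp N e" using eq_top_exp[of b N e] bB ie eN by (simp add: mono_basis_Suc_iff)
  then show ?thesis
    using lin_mult_kernel_vector_last_0[OF _ _ bB, of c] False ie z by simp
qed

lemma not_mult_injective_last_nonzero:
  fixes c :: "nat \<Rightarrow> 'k::field"
  assumes epos: "\<forall>j<N. 0 < e j" and ie: "Suc i = e N" and eN: "e N = deg_below N (top_exp N e)"
    and z: "of_nat (multinomial N (top_exp N e)) = (0::'k)" and cN: "c N \<noteq> 0"
  shows "\<not> mult_injective (Suc N) e c i"
proof
  assume "mult_injective (Suc N) e c i"
  then have "kernel_vector N e c i (corner_exp N e) = 0"
    using kernel_vector_in_graded_piece kernel_vector_in_kernel[where c=c and N=N and e=e, OF cN ie eN z]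
    unfolding mult_injective_def by blast
  then show False
    using kernel_vector_corner[OF corner_exp_in_mono_basis[OF epos ie], of c] by simp
qed

text \<open>Every f whose image vanishes off the top monomial x^t is a multiple of the kernel vector,
  so its image vanishes at x^t as well.\<close>

lemma not_mult_surjective_last_nonzero:
  fixes c :: "nat \<Rightarrow> 'k::field"
  assumes epos: "\<forall>j<N. 0 < e j" and ie: "Suc i = e N" and eN: "e N = deg_below N (top_exp N e)"
    and z: "of_nat (multinomial N (top_exp N e)) = (0::'k)" and cN: "c N \<noteq> 0"
  shows "\<not> mult_surjective (Suc N) e c i"
proof
  let ?t = "top_exp N e" and ?H = "kernel_vector N e c i"
  assume "mult_surjective (Suc N) e c i"
  moreover have tB: "?t \<in> mono_basis (Suc N) e (Suc i)"
    by (rule top_exp_in_mono_basis) (use epos ie eN in auto)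
  then have "(\<lambda>b. if b = ?t then 1 else 0) \<in> graded_piece (Suc N) e (Suc i)"
    unfolding graded_piece_def by auto
  ultimately obtain f where f: "f \<in> graded_piece (Suc N) e i"
    and lf: "\<forall>b\<in>mono_basis (Suc N) e (Suc i). lin_mult (Suc N) c f b = (if b = ?t then 1 else 0)"
    unfolding mult_surjective_def by fast
  have "lin_mult (Suc N) c f b = 0" if "b \<in> mono_basis (Suc N) e (Suc i)" "0 < b N" for b
  proof -
    have "b \<noteq> ?t" using that(2) by (auto simp: top_exp_def)
    then show ?thesis using lf that(1) by simp
  qed
  then have "f a = f (corner_exp N e) * ?H a" for a
    by (rule kernel_eq_scaled_kernel_vector[where c=c and N=N, OF cN ie f])
  then have "lin_mult (Suc N) c f ?t = f (corner_exp N e) * lin_mult (Suc N) c ?H ?t"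
    by (rule lin_mult_scaled)
  also have "\<dots> = 0" using kernel_vector_in_kernel[where c=c and N=N and e=e, OF cN ie eN z tB] by simp
  finally show False using lf tB by simp
qed

text \<open>With c N = 0, the coefficient of l f at x_j * x_N^(e N - 1) is c j * f (x_N^(e N - 1)), so two
  of these cannot be prescribed independently.\<close>

lemma not_mult_surjective_last_zero:
  fixes c :: "nat \<Rightarrow> 'k::field"
  assumes epos: "\<forall>j<N. 0 < e j" and ie: "Suc i = e N"
    and i12: "i1 < N" "i2 < N" "i1 \<noteq> i2" "1 < e i1" "1 < e i2" and cN: "c N = 0"
  shows "\<not> mult_surjective (Suc N) e c i"
proof
  assume surj: "mult_surjective (Suc N) e c i"
  let ?u = "corner_exp N e"
  define v where "v x = ?u(x := 1)" for x
  have vB: "v x \<in> mono_basis (Suc N) e (Suc i)" if "x < N" "1 < e x" for x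
  proof -
    have "deg_below N (v x) = 1"
      using that(1) by (simp add: deg_below_def v_def corner_exp_def if_distrib sum.delta cong: if_cong)
    then show ?thesis using that ie epos by (auto simp: mono_basis_Suc_iff v_def corner_exp_def)
  qed
  have lv: "lin_mult (Suc N) c f (v x) = c x * f ?u" if "x < N" for f x
  proof -
    have "?u = (v x)(x := v x x - 1)" using that by (auto simp: v_def corner_exp_def)
    moreover have "0 < v x j \<longleftrightarrow> j = x" if "j < N" for j
      using that \<open>x < N\<close> by (auto simp: v_def corner_exp_def)
    ultimately show ?thesis
      unfolding lin_mult_Suc using that cN by (simp add: if_distrib sum.delta cong: if_cong)
  qed
  define w where "w = (if c i1 = 0 then v i1 else v i2)"
  have "(\<lambda>b. if b = w then 1 else 0) \<in> graded_piece (Suc N) e (Suc i)"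
    using vB i12 unfolding graded_piece_def w_def by auto
  then obtain f where "\<forall>b\<in>mono_basis (Suc N) e (Suc i). lin_mult (Suc N) c f b = (if b = w then 1 else 0)"
    using surj unfolding mult_surjective_def by fast
  then have lf: "lin_mult (Suc N) c f b = (if b = w then 1 else 0)"
    if "b \<in> mono_basis (Suc N) e (Suc i)" for b
    using that by blast
  have "v i1 \<noteq> v i2" using i12 by (auto simp: v_def fun_eq_iff corner_exp_def)
  then show False
    using lf[OF vB[OF i12(1,4)]] lf[OF vB[OF i12(2,5)]] lv[OF i12(1)] lv[OF i12(2)]
    by (cases "c i1 = 0") (auto simp: w_def)
qed

text \<open>With c N = 0, only the top monomial x^t sees the monomials x^t / x_i1 and x^t / x_i2, so a
  suitable combination of them is annihilated.\<close>

lemma not_mult_injective_last_zero: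
  fixes c :: "nat \<Rightarrow> 'k::field"
  assumes epos: "\<forall>j<N. 0 < e j" and ie: "Suc i = e N" and eN: "e N = deg_below N (top_exp N e)"
    and i12: "i1 < N" "i2 < N" "i1 \<noteq> i2" "0 < top_exp N e i1" "0 < top_exp N e i2"
    and cN: "c N = 0"
  shows "\<not> mult_injective (Suc N) e c i"
proof
  assume inj: "mult_injective (Suc N) e c i"
  let ?t = "top_exp N e"
  have tB: "?t \<in> mono_basis (Suc N) e (Suc i)"
    by (rule top_exp_in_mono_basis) (use epos ie eN in auto)
  define w where "w x = ?t(x := ?t x - 1)" for x
  have wB: "w x \<in> mono_basis (Suc N) e i" if "x < N" "0 < ?t x" for x
    using mono_basis_dec[OF tB _ that(2)] that(1) by (simp add: w_def)
  have wN: "w x N = 0" for x by (simp add: w_def top_exp_def)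
  have "w i1 \<noteq> w i2"
  proof
    assume "w i1 = w i2"
    then have "w i1 i1 = w i2 i1" by simp
    with i12 show False by (simp add: w_def)
  qed
  obtain \<alpha> \<beta> where ab: "c i1 * \<alpha> + c i2 * \<beta> = 0" "\<alpha> \<noteq> 0 \<or> \<beta> \<noteq> 0"
    by (cases "c i1 = 0") (auto intro: that[of 1 0] that[of "c i2" "- c i1"] simp: algebra_simps)
  define f where "f a = (if a = w i1 then \<alpha> else 0) + (if a = w i2 then \<beta> else 0)" for a
  have fG: "f \<in> graded_piece (Suc N) e i" using wB i12 unfolding graded_piece_def f_def by auto
  have "lin_mult (Suc N) c f b = 0" if bB: "b \<in> mono_basis (Suc N) e (Suc i)" for b
  proof (cases "0 < b N")
    case True
    then have "f (b(j := b j - 1)) = 0" if "j < N" for j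
      using that wN[of i1] wN[of i2] unfolding f_def by (auto dest: fun_cong[where x=N])
    then have "(\<Sum>j<N. if 0 < b j then c j * f (b(j := b j - 1)) else 0) = 0"
      by (intro sum.neutral) auto
    then show ?thesis unfolding lin_mult_Suc using cN by simp
  next
    case False
    then have "b = ?t" using eq_top_exp[of b N e] bB ie eN by (simp add: mono_basis_Suc_iff)
    moreover have "lin_mult (Suc N) c f ?t = c i1 * \<alpha> + c i2 * \<beta>"
      using lin_mult_indicator[of i1 "Suc N" ?t c \<alpha>] lin_mult_indicator[of i2 "Suc N" ?t c \<beta>] i12
      unfolding f_def lin_mult_add w_def by simp
    ultimately show ?thesis using ab by simp
  qed
  then have "\<forall>a. f a = 0" using inj fG unfolding mult_injective_def by blast
  then show False using ab \<open>w i1 \<noteq> w i2\<close> unfolding f_def by (metis add.right_neutral add_0)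
qed

lemma not_has_WLP_balanced:
  assumes epos: "\<forall>j<N. 0 < e j" and eN: "e N = deg_below N (top_exp N e)"
    and z: "of_nat (multinomial N (top_exp N e)) = (0::'k::field)"
  shows "\<not> has_WLP TYPE('k) (Suc N) e"
proof
  assume "has_WLP TYPE('k) (Suc N) e"
  then obtain c :: "nat \<Rightarrow> 'k"
    where c: "mult_injective (Suc N) e c (e N - 1) \<or> mult_surjective (Suc N) e c (e N - 1)"
    unfolding has_WLP_def by blast
  have "e N \<noteq> 0"
  proof
    assume "e N = 0"
    then have "multinomial N (top_exp N e) = 1" using eN multinomial_deg_0 by simp
    with z show False by simp
  qed
  then have ie: "Suc (e N - 1) = e N" by simp
  show False
  proof (cases "c N = 0")
    case True
    have "of_nat (multinomial N (top_exp N e)) \<noteq> (1::'k)" using z by simp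
    then obtain i1 i2 where i12: "i1 < N" "i2 < N" "i1 \<noteq> i2" "0 < top_exp N e i1" "0 < top_exp N e i2"
      using multinomial_ne_1_two_support by (metis of_nat_1)
    then have "1 < e i1" "1 < e i2" by (auto simp: top_exp_def)
    then show False
      using c i12 not_mult_injective_last_zero[where c=c and N=N and e=e, OF epos ie eN i12 True]
        not_mult_surjective_last_zero[where c=c and N=N and e=e, OF epos ie i12(1-3) _ _ True]
      by blast
  next
    case False
    then show False
      using c not_mult_injective_last_nonzero[OF epos ie eN z] not_mult_surjective_last_nonzero[OF epos ie eN z]
      by blast
  qed
qed

lemma has_WLP_no_vars: "has_WLP TYPE('k::field) 0 e"
  unfolding has_WLP_def mult_surjective_def graded_piece_def mono_basis_def by auto

lemma has_WLP_last_exp_0: "e N = 0 \<Longrightarrow> has_WLP TYPE('k::field) (Suc N) e"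
  unfolding has_WLP_def using mult_injective_last_exp_0 by blast

lemma top_exp_upd_last [simp]: "top_exp N (e(N := x)) = top_exp N e"
  unfolding top_exp_def by auto

theorem proposition4p10:
  fixes n p :: nat and d :: "nat \<Rightarrow> nat"
  assumes char: "CHAR('k::field) = p" and ppos: "p > 0"
    and dpos: "\<forall>i < n - 1. d i > 0"
    and dn: "d (n - 1) = (\<Sum>i < n - 1. d i - 1)"
  shows "(\<not> p dvd (fact (d (n - 1)) div (\<Prod>i < n - 1. fact (d i - 1)) :: nat) \<longrightarrow>
            has_WLP TYPE('k) n d \<and> has_WLP TYPE('k) n (d(n - 1 := d (n - 1) - 1)))
       \<and> (p dvd (fact (d (n - 1)) div (\<Prod>i < n - 1. fact (d i - 1)) :: nat) \<longrightarrow>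
            \<not> has_WLP TYPE('k) n d)"
proof (cases n)
  case 0
  then have "\<not> p dvd (fact (d (n - 1)) div (\<Prod>i < n - 1. fact (d i - 1)) :: nat)"
    using dn char CHAR_not_1[where 'a='k] by simp
  then show ?thesis using 0 has_WLP_no_vars by blast
next
  case (Suc N)
  then have dpos: "\<forall>j<N. 0 < d j" and dN: "d N = deg_below N (top_exp N d)"
    using dpos dn by (simp_all add: deg_below_top_exp)
  have "(fact (d (n - 1)) div (\<Prod>i < n - 1. fact (d i - 1)) :: nat) = multinomial N (top_exp N d)"
    unfolding multinomial_eq_fact_div using Suc dN by (simp add: top_exp_def)
  moreover have "of_nat (multinomial N (top_exp N d)) = (0::'k) \<longleftrightarrow> p dvd multinomial N (top_exp N d)"
    using of_nat_eq_0_iff_char_dvd char by blast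
  moreover have "has_WLP TYPE('k) (Suc N) (d(N := d N - 1))"
    if "of_nat (multinomial N (top_exp N d)) \<noteq> (0::'k)"
    using has_WLP_last_exp_0[of "d(N := d N - 1)" N] has_WLP_shortened[of N "d(N := d N - 1)"] that dpos dN
    by (cases "d N = 0") auto
  ultimately show ?thesis
    using has_WLP_balanced[OF dpos dN] not_has_WLP_balanced[OF dpos dN] Suc by auto
qed

end
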